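(* For $N\in\mathbb{Z}$ let $d_N:=\tfrac12(|N|+1)(|N|+2)$ and define elements $\psi^N_{j,k,l}\in\mathcal{A}(S^5_q)$ by $(\psi^N_{j,k,l})^*:=\sqrt{[j,k,l]!}\,z_1^jz_2^kz_3^l$ if $N\geq0$ (with $j+k+l=N$), and $(\psi^N_{j,k,l})^*:=q^{-N+j-l}\sqrt{[j,k,l]!}\,(z_1^jz_2^kz_3^l)^*$ if $N\le 0$ (with $j+k+l=-N$), where $j,k,l\ge 0$. Let $\Psi_N$ be the column vector (of length $d_N$) with components $\psi^N_{j,k,l}$, and $P_N:=\Psi_N\Psi_N^\dagger$. Then $\Psi_N^\dagger\Psi_N=1$, so $P_N$ is a projection ($P_N^2=P_N=P_N^*$) in $M_{d_N}(\mathcal{A}(\mathbb{C}P^2_q))$. Moreover the map $P_N\mathcal{A}(\mathbb{C}P^2_q)^{d_N}\to\Sigma_{0,N}$, $v\mapsto \Psi_N^\dagger v$, is an isomorphism of right $\mathcal{A}(\mathbb{C}P^2_q)$-modules with inverse $a\mapsto \Psi_N a$, and the map $\mathcal{A}(\mathbb{C}P^2_q)^{d_N}P_{-N}\to\Sigma_{0,N}$, $v\mapsto v\Psi_{-N}$ ($v$ a row vector), is an isomorphism of left $\mathcal{A}(\mathbb{C}P^2_q)$-modules with inverse $a\mapsto a\Psi_{-N}^\dagger$.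
   Context: Fix $0<q<1$. $\mathcal{A}(S^5_q)$ is the unital $*$-algebra generated by $z_1,z_2,z_3$ and their adjoints with relations: $z_iz_j=qz_jz_i$ for $i<j$; $z_i^*z_j=qz_jz_i^*$ for $i\neq j$; $[z_1^*,z_1]=0$; $[z_2^*,z_2]=(1-q^2)z_1z_1^*$; $[z_3^*,z_3]=(1-q^2)(z_1z_1^*+z_2z_2^* )$; $z_1z_1^*+z_2z_2^*+z_3z_3^*=1$. These relations are homogeneous for the $\mathbb{Z}$-grading with $\deg z_i=1$, $\deg z_i^*=-1$; $\Sigma_{0,N}$ denotes the homogeneous component of degree $N$, and $\mathcal{A}(\mathbb{C}P^2_q):=\Sigma_{0,0}$ (a $*$-subalgebra, generated by $p_{ij}:=z_i^*z_j$); each $\Sigma_{0,N}$ is an $\mathcal{A}(\mathbb{C}P^2_q)$-bimodule. $[x]:=\frac{q^x-q^{-x}}{q-q^{-1}}$, $[n]!:=[n]\cdots[1]$, $[0]!:=1$, $[j,k,l]!:=q^{-(jk+kl+lj)}\frac{[j+k+l]!}{[j]![k]![l]!}$. $\Psi_N^\dagger$ is the conjugate-transpose row vector. *)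

theory Defs
  imports Complex_Main
begin

text \<open>Involution (star operation) on a unital algebra; all scalars appearing in the
statement are real, so a complex *-algebra is in particular such an algebra.\<close>
definition star_alg :: "('a::real_algebra_1 \<Rightarrow> 'a) \<Rightarrow> bool" where
  "star_alg st \<longleftrightarrow>
     (\<forall>x y. st (x + y) = st x + st y) \<and>
     (\<forall>x y. st (x * y) = st y * st x) \<and>
     (\<forall>x. st (st x) = x) \<and>
     (\<forall>r x. st (r *\<^sub>R x) = r *\<^sub>R st x) \<and>
     st 1 = 1"

definition S5q_rels :: "real \<Rightarrow> ('a::real_algebra_1 \<Rightarrow> 'a) \<Rightarrow> (nat \<Rightarrow> 'a) \<Rightarrow> bool" where
  "S5q_rels q st z \<longleftrightarrow>
     (\<forall>i\<in>{1,2,3}. \<forall>j\<in>{1,2,3}. i < j \<longrightarrow> z i * z j = q *\<^sub>R (z j * z i)) \<and>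
     (\<forall>i\<in>{1,2,3}. \<forall>j\<in>{1,2,3}. i \<noteq> j \<longrightarrow> st (z i) * z j = q *\<^sub>R (z j * st (z i))) \<and>
     st (z 1) * z 1 - z 1 * st (z 1) = 0 \<and>
     st (z 2) * z 2 - z 2 * st (z 2) = (1 - q\<^sup>2) *\<^sub>R (z 1 * st (z 1)) \<and>
     st (z 3) * z 3 - z 3 * st (z 3) = (1 - q\<^sup>2) *\<^sub>R (z 1 * st (z 1) + z 2 * st (z 2)) \<and>
     z 1 * st (z 1) + z 2 * st (z 2) + z 3 * st (z 3) = 1"

definition Z_grading :: "('a::real_algebra_1 \<Rightarrow> 'a) \<Rightarrow> (int \<Rightarrow> 'a set) \<Rightarrow> bool" where
  "Z_grading st Sig \<longleftrightarrow>
     (\<forall>n. 0 \<in> Sig n \<and> (\<forall>x\<in>Sig n. \<forall>y\<in>Sig n. x + y \<in> Sig n) \<and>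
          (\<forall>r. \<forall>x\<in>Sig n. r *\<^sub>R x \<in> Sig n)) \<and>
     (\<forall>m n. \<forall>x\<in>Sig m. \<forall>y\<in>Sig n. x * y \<in> Sig (m + n)) \<and>
     1 \<in> Sig 0 \<and>
     (\<forall>n. \<forall>x\<in>Sig n. st x \<in> Sig (- n)) \<and>
     (\<forall>x. \<exists>!f. finite {n. f n \<noteq> 0} \<and> (\<forall>n. f n \<in> Sig n) \<and>
              x = (\<Sum>n\<in>{n. f n \<noteq> 0}. f n))"

definition qnum :: "real \<Rightarrow> nat \<Rightarrow> real" where
  "qnum q x = (q ^ x - inverse q ^ x) / (q - inverse q)"

definition qfact :: "real \<Rightarrow> nat \<Rightarrow> real" where
  "qfact q n = (\<Prod>i = 1..n. qnum q i)"

definition qtri :: "real \<Rightarrow> nat \<Rightarrow> nat \<Rightarrow> nat \<Rightarrow> real" where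
  "qtri q j k l = inverse q ^ (j * k + k * l + l * j) * qfact q (j + k + l)
                   / (qfact q j * qfact q k * qfact q l)"

definition idx :: "int \<Rightarrow> (nat \<times> nat \<times> nat) set" where
  "idx N = {(j, k, l). j + k + l = nat \<bar>N\<bar>}"

definition dN :: "int \<Rightarrow> nat" where
  "dN N = (nat \<bar>N\<bar> + 1) * (nat \<bar>N\<bar> + 2) div 2"

definition zmono :: "(nat \<Rightarrow> 'a::real_algebra_1) \<Rightarrow> nat \<Rightarrow> nat \<Rightarrow> nat \<Rightarrow> 'a" where
  "zmono z j k l = z 1 ^ j * z 2 ^ k * z 3 ^ l"

definition psi_star :: "real \<Rightarrow> ('a::real_algebra_1 \<Rightarrow> 'a) \<Rightarrow> (nat \<Rightarrow> 'a) \<Rightarrow> int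
                         \<Rightarrow> nat \<times> nat \<times> nat \<Rightarrow> 'a" where
  "psi_star q st z N t = (case t of (j, k, l) \<Rightarrow>
      if N \<ge> 0 then sqrt (qtri q j k l) *\<^sub>R zmono z j k l
      else (q powi (- N + int j - int l) * sqrt (qtri q j k l)) *\<^sub>R st (zmono z j k l))"

definition psi :: "real \<Rightarrow> ('a::real_algebra_1 \<Rightarrow> 'a) \<Rightarrow> (nat \<Rightarrow> 'a) \<Rightarrow> int
                   \<Rightarrow> nat \<times> nat \<times> nat \<Rightarrow> 'a" where
  "psi q st z N t = (if t \<in> idx N then st (psi_star q st z N t) else 0)"

definition Pmat :: "real \<Rightarrow> ('a::real_algebra_1 \<Rightarrow> 'a) \<Rightarrow> (nat \<Rightarrow> 'a) \<Rightarrow> int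
                    \<Rightarrow> nat \<times> nat \<times> nat \<Rightarrow> nat \<times> nat \<times> nat \<Rightarrow> 'a" where
  "Pmat q st z N t s = psi q st z N t * st (psi q st z N s)"

text \<open>A(CP^2_q)^{d_N}: vectors indexed by idx N with entries in Sig 0 (0 outside idx N).\<close>
definition vecs :: "(int \<Rightarrow> 'a::real_algebra_1 set) \<Rightarrow> int \<Rightarrow> (nat \<times> nat \<times> nat \<Rightarrow> 'a) set" where
  "vecs Sig N = {v. (\<forall>t\<in>idx N. v t \<in> Sig 0) \<and> (\<forall>t. t \<notin> idx N \<longrightarrow> v t = 0)}"

end

theory Submission
  imports Defs
begin

text \<open>
  The only non-formal ingredient is \<open>\<Psi>\<^sub>N\<^sup>\<dagger> \<Psi>\<^sub>N = 1\<close>. For \<open>N \<ge> 0\<close> it reads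
  \<open>\<Sum> [j,k,l]! m m\<^sup>* = 1\<close> over the monomials \<open>m = z\<^sub>1\<^sup>j z\<^sub>2\<^sup>k z\<^sub>3\<^sup>l\<close> of degree \<open>N\<close>,
  for \<open>N < 0\<close> it reads \<open>\<Sum> [j,k,l]! q\<^sup>2\<^sup>(\<^sup>2\<^sup>j\<^sup>+\<^sup>k\<^sup>) m\<^sup>* m = 1\<close>. Both follow by induction on the
  degree: the q-trinomial coefficients obey two q-Pascal recurrences (derived from the
  additivity of q-numbers), and a general summation principle for such recurrences
  (\<open>idxn_pascal_sum\<close>) reduces the inductive step to an identity for a single monomial.
  That identity is the sphere relation \<open>\<Sum> z\<^sub>i z\<^sub>i\<^sup>* = 1\<close> (resp. its opposite form
  \<open>q\<^sup>4 z\<^sub>1\<^sup>* z\<^sub>1 + q\<^sup>2 z\<^sub>2\<^sup>* z\<^sub>2 + z\<^sub>3\<^sup>* z\<^sub>3 = 1\<close>) after moving a generator to the end (resp.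
  the front) of the monomial with the q-commutation relations.

  Everything else is formal: the locale \<open>isometric_column\<close> shows, for any homogeneous
  column \<open>\<Psi>\<close> of degree \<open>d\<close> with \<open>\<Psi>\<^sup>\<dagger> \<Psi> = 1\<close>, that \<open>\<Psi> \<Psi>\<^sup>\<dagger>\<close> is a projection whose range on
  columns is \<open>\<Psi> \<cdot> \<Sigma>\<^sub>-\<^sub>d\<close> and on rows is \<open>\<Sigma>\<^sub>d \<cdot> \<Psi>\<^sup>\<dagger>\<close>; the module isomorphisms are then
  immediate.
\<close>

section \<open>q-numbers and q-trinomial coefficients\<close>

lemma qnum_0 [simp]: "qnum q 0 = 0"
  by (simp add: qnum_def)

lemma qnum_add:
  assumes "0 < q" "q < 1"
  shows "qnum q (a + b) = inverse q ^ b * qnum q a + q ^ a * qnum q b"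
proof -
  have "q - inverse q \<noteq> 0" using assms by (metis less_trans one_less_inverse order.irrefl right_minus_eq)
  moreover have "q ^ (a + b) - inverse q ^ (a + b)
      = inverse q ^ b * (q ^ a - inverse q ^ a) + q ^ a * (q ^ b - inverse q ^ b)"
    by (simp add: power_add algebra_simps)
  ultimately show ?thesis
    unfolding qnum_def by (simp add: add_divide_distrib)
qed

lemma qnum_pos:
  assumes "0 < q" "q < 1" "0 < n"
  shows "0 < qnum q n"
proof -
  have "q ^ n < inverse q ^ n"
    using assms by (intro power_strict_mono) (auto intro: less_trans one_less_inverse)
  moreover have "q < inverse q" using assms by (metis less_trans one_less_inverse)
  ultimately show ?thesis unfolding qnum_def by (simp add: divide_neg_neg)
qed

lemma qfact_pos: "0 < q \<Longrightarrow> q < 1 \<Longrightarrow> 0 < qfact q n"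
  unfolding qfact_def using qnum_pos by (intro prod_pos) auto

lemma qfact_Suc: "qfact q (Suc n) = qfact q n * qnum q (Suc n)"
  unfolding qfact_def by (simp add: prod.nat_ivl_Suc')

lemma qnum_over_qfact:
  assumes "0 < q" "q < 1"
  shows "qnum q j / qfact q j = (if j = 0 then 0 else inverse (qfact q (j - 1)))"
  using qnum_pos[OF assms, of j] by (cases j) (auto simp: qfact_Suc field_simps)

definition qmult :: "real \<Rightarrow> nat \<Rightarrow> nat \<Rightarrow> nat \<Rightarrow> real" where
  "qmult q j k l = qfact q (j + k + l) / (qfact q j * qfact q k * qfact q l)"

lemma qmult_pascal:
  assumes q: "0 < q" "q < 1" and n: "j + k + l = Suc n"
    and split: "qnum q (Suc n) = a * qnum q j + b * qnum q k + c * qnum q l"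
  shows "qmult q j k l = (if 0 < j then a * qmult q (j - 1) k l else 0)
                       + (if 0 < k then b * qmult q j (k - 1) l else 0)
                       + (if 0 < l then c * qmult q j k (l - 1) else 0)" (is "_ = ?rhs")
proof -
  have lower: "qfact q n * qnum q x / (qfact q x * Y)
      = (if x = 0 then 0 else qfact q n / (qfact q (x - 1) * Y))" for x Y
  proof -
    have "qfact q n * qnum q x / (qfact q x * Y) = qfact q n * (qnum q x / qfact q x) / Y"
      by simp
    also have "\<dots> = (if x = 0 then 0 else qfact q n / (qfact q (x - 1) * Y))"
      unfolding qnum_over_qfact[OF q] by (simp add: divide_inverse)
    finally show ?thesis .
  qed
  have "qmult q j k l = a * (qfact q n * qnum q j / (qfact q j * (qfact q k * qfact q l)))
      + b * (qfact q n * qnum q k / (qfact q k * (qfact q j * qfact q l)))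
      + c * (qfact q n * qnum q l / (qfact q l * (qfact q j * qfact q k)))"
    unfolding qmult_def n qfact_Suc split by (simp add: field_simps add_divide_distrib)
  also have "\<dots> = ?rhs"
    unfolding lower using n by (cases j; cases k; cases l) (simp_all add: qmult_def ac_simps)
  finally show ?thesis .
qed

lemma qtri_qmult: "qtri q j k l = inverse q ^ (j * k + k * l + l * j) * qmult q j k l"
  by (simp add: qtri_def qmult_def)

lemma qtri_sym: "qtri q j k l = qtri q l k j"
  by (simp add: qtri_def ac_simps)

text \<open>The q-Pascal recurrence for \<open>[j,k,l]!\<close> that matches appending a generator to a monomial.\<close>
lemma qtri_pascal:
  assumes q: "0 < q" "q < 1" and n: "j + k + l = Suc n"
  shows "qtri q j k l = (if 0 < j then inverse q ^ (2 * (k + l)) * qtri q (j - 1) k l else 0)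
                      + (if 0 < k then inverse q ^ (2 * l) * qtri q j (k - 1) l else 0)
                      + (if 0 < l then qtri q j k (l - 1) else 0)"
proof -
  define r where "r = inverse q"
  define e where "e = (\<lambda>j k l. j * k + k * l + l * j :: nat)"
  have qtri_e: "qtri q a b c = r ^ e a b c * qmult q a b c" for a b c
    by (simp add: qtri_qmult e_def r_def)
  have cancel: "r ^ m * q ^ m = 1" for m
    using q by (simp add: r_def power_mult_distrib[symmetric])
  have "qnum q (Suc n) = r ^ (k + l) * qnum q j + (q ^ j * r ^ l) * qnum q k + q ^ (j + k) * qnum q l"
    using qnum_add[OF q, of j "k + l"] qnum_add[OF q, of k l] n
    by (simp add: r_def algebra_simps power_add)
  note rec = qmult_pascal[OF q n this]
  have "r ^ e j k l * (if 0 < j then r ^ (k + l) * qmult q (j - 1) k l else 0)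
      = (if 0 < j then r ^ (2 * (k + l)) * qtri q (j - 1) k l else 0)"
  proof (cases j)
    case (Suc j')
    then have "e j k l = e j' k l + (k + l)" by (simp add: e_def)
    then show ?thesis using Suc by (simp add: qtri_e power_add power_mult power2_eq_square ac_simps)
  qed simp
  moreover have "r ^ e j k l * (if 0 < k then (q ^ j * r ^ l) * qmult q j (k - 1) l else 0)
      = (if 0 < k then r ^ (2 * l) * qtri q j (k - 1) l else 0)"
  proof (cases k)
    case (Suc k')
    then have "e j k l = e j k' l + (j + l)" by (simp add: e_def)
    then show ?thesis using Suc cancel[of j]
      by (simp add: qtri_e power_add power_mult power2_eq_square ac_simps)
  qed simp
  moreover have "r ^ e j k l * (if 0 < l then q ^ (j + k) * qmult q j k (l - 1) else 0)
      = (if 0 < l then qtri q j k (l - 1) else 0)"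
  proof (cases l)
    case (Suc l')
    then have "e j k l = e j k l' + (j + k)" by (simp add: e_def)
    then show ?thesis using Suc cancel[of "j + k"]
      by (simp add: qtri_e power_add ac_simps)
  qed simp
  ultimately show ?thesis
    unfolding r_def[symmetric] qtri_e[of j k l] rec by (simp only: distrib_left)
qed

text \<open>The mirror recurrence, matching prepending a generator; it is the previous one read
  through the symmetry \<open>j \<leftrightarrow> l\<close>.\<close>
lemma qtri_pascal_mirror:
  assumes q: "0 < q" "q < 1" and n: "j + k + l = Suc n"
  shows "qtri q j k l = (if 0 < j then qtri q (j - 1) k l else 0)
                      + (if 0 < k then inverse q ^ (2 * j) * qtri q j (k - 1) l else 0)
                      + (if 0 < l then inverse q ^ (2 * (j + k)) * qtri q j k (l - 1) else 0)"
proof -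
  have "l + k + j = Suc n" using n by simp
  from qtri_pascal[OF q this] show ?thesis
    unfolding qtri_sym[of q l k j] qtri_sym[of q "l - 1" k j] qtri_sym[of q l "k - 1" j]
      qtri_sym[of q l k "j - 1"]
    by (simp add: add_ac)
qed

lemma qtri_pos: "0 < q \<Longrightarrow> q < 1 \<Longrightarrow> 0 < qtri q j k l"
  unfolding qtri_def using qfact_pos by simp

lemma qtri_000 [simp]: "qtri q 0 0 0 = 1"
  by (simp add: qtri_def qfact_def)

section \<open>Triples of fixed total and Pascal-type sums\<close>

definition idxn :: "nat \<Rightarrow> (nat \<times> nat \<times> nat) set" where
  "idxn n = {(j, k, l). j + k + l = n}"

lemma idx_idxn: "idx N = idxn (nat \<bar>N\<bar>)"
  by (simp add: idx_def idxn_def)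

lemma idxn_0: "idxn 0 = {(0, 0, 0)}"
  by (auto simp: idxn_def)

lemma finite_idxn: "finite (idxn n)"
proof (rule finite_subset)
  show "idxn n \<subseteq> {..n} \<times> {..n} \<times> {..n}" by (auto simp: idxn_def)
qed auto

lemma idxn_shift_image:
  "(\<lambda>(j, k, l). (Suc j, k, l)) ` idxn n = {(j, k, l) \<in> idxn (Suc n). 0 < j}"
  "(\<lambda>(j, k, l). (j, Suc k, l)) ` idxn n = {(j, k, l) \<in> idxn (Suc n). 0 < k}"
  "(\<lambda>(j, k, l). (j, k, Suc l)) ` idxn n = {(j, k, l) \<in> idxn (Suc n). 0 < l}"
  by (force simp: idxn_def image_iff gr0_conv_Suc)+

lemma sum_idxn_shift:
  assumes "inj f" and "f ` idxn n \<subseteq> idxn (Suc n)"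
  shows "(\<Sum>t\<in>idxn (Suc n). if t \<in> f ` idxn n then g t else 0) = (\<Sum>t\<in>idxn n. g (f t))"
proof -
  have "(\<Sum>t\<in>idxn (Suc n). if t \<in> f ` idxn n then g t else 0) = sum g (f ` idxn n)"
    using assms(2) by (simp add: sum.inter_restrict[symmetric] finite_idxn Int_absorb1)
  also have "\<dots> = (\<Sum>t\<in>idxn n. g (f t))"
    using assms(1) by (simp add: sum.reindex inj_on_subset)
  finally show ?thesis .
qed

lemma card_idxn: "card (idxn n) = (n + 1) * (n + 2) div 2"
proof (induction n)
  case 0
  show ?case by (simp add: idxn_0)
next
  case (Suc n)
  let ?shift = "\<lambda>(j, k, l). (Suc j, k, l)"
  let ?B = "{(j, k, l) \<in> idxn (Suc n). j = 0}"
  have split: "idxn (Suc n) = ?shift ` idxn n \<union> ?B"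
    unfolding idxn_shift_image by auto
  have "?B = (\<lambda>k. (0, k, Suc n - k)) ` {..Suc n}"
    by (auto simp: idxn_def image_iff)
  then have B: "finite ?B" "card ?B = n + 2"
    by (simp_all add: card_image inj_on_def)
  moreover have "card (?shift ` idxn n) = card (idxn n)"
    by (rule card_image) (auto simp: inj_on_def)
  moreover have "?shift ` idxn n \<inter> ?B = {}"
    by auto
  ultimately have "card (idxn (Suc n)) = card (idxn n) + (n + 2)"
    by (subst split, subst card_Un_disjoint) (simp_all add: finite_idxn)
  then show ?case
    using Suc.IH by simp
qed

text \<open>Summation principle behind both orthonormality relations: if the weights \<open>w\<close> satisfy a
  Pascal recurrence with coefficients \<open>a, b, c\<close>, and the vectors \<open>m\<close> satisfy the dual local
  relation, then \<open>\<Sum> w m\<close> over the triples of total \<open>n\<close> does not depend on \<open>n\<close>.\<close>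
lemma idxn_pascal_sum:
  fixes w a b c :: "nat \<Rightarrow> nat \<Rightarrow> nat \<Rightarrow> real" and m :: "nat \<Rightarrow> nat \<Rightarrow> nat \<Rightarrow> 'a::real_vector"
  assumes rec: "\<And>j k l n. j + k + l = Suc n \<Longrightarrow>
      w j k l = (if 0 < j then a j k l * w (j - 1) k l else 0)
              + (if 0 < k then b j k l * w j (k - 1) l else 0)
              + (if 0 < l then c j k l * w j k (l - 1) else 0)"
    and local: "\<And>j k l. a (Suc j) k l *\<^sub>R m (Suc j) k l + b j (Suc k) l *\<^sub>R m j (Suc k) l
                       + c j k (Suc l) *\<^sub>R m j k (Suc l) = m j k l"
  shows "(\<Sum>(j, k, l)\<in>idxn n. w j k l *\<^sub>R m j k l) = w 0 0 0 *\<^sub>R m 0 0 0"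
proof (induction n)
  case 0
  show ?case by (simp add: idxn_0)
next
  case (Suc n)
  let ?f1 = "\<lambda>(j, k, l). (Suc j, k, l)"
  let ?f2 = "\<lambda>(j, k, l). (j, Suc k, l)"
  let ?f3 = "\<lambda>(j, k, l). (j, k, Suc l)"
  define g1 where "g1 = (\<lambda>(j, k, l). (a j k l * w (j - 1) k l) *\<^sub>R m j k l)"
  define g2 where "g2 = (\<lambda>(j, k, l). (b j k l * w j (k - 1) l) *\<^sub>R m j k l)"
  define g3 where "g3 = (\<lambda>(j, k, l). (c j k l * w j k (l - 1)) *\<^sub>R m j k l)"
  have "(\<Sum>(j, k, l)\<in>idxn (Suc n). w j k l *\<^sub>R m j k l)
      = (\<Sum>t\<in>idxn (Suc n). (if t \<in> ?f1 ` idxn n then g1 t else 0)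
          + (if t \<in> ?f2 ` idxn n then g2 t else 0)
          + (if t \<in> ?f3 ` idxn n then g3 t else 0))"
  proof (rule sum.cong)
    fix t assume "t \<in> idxn (Suc n)"
    then obtain j k l where t: "t = (j, k, l)" "j + k + l = Suc n"
      by (cases t) (auto simp: idxn_def)
    show "(case t of (j, k, l) \<Rightarrow> w j k l *\<^sub>R m j k l) = (if t \<in> ?f1 ` idxn n then g1 t else 0)
          + (if t \<in> ?f2 ` idxn n then g2 t else 0)
          + (if t \<in> ?f3 ` idxn n then g3 t else 0)"
      unfolding t(1) g1_def g2_def g3_def idxn_shift_image using rec[OF t(2)] t(2)
      by (simp add: scaleR_add_left idxn_def)
  qed simp
  also have "\<dots> = (\<Sum>t\<in>idxn n. g1 (?f1 t)) + (\<Sum>t\<in>idxn n. g2 (?f2 t)) + (\<Sum>t\<in>idxn n. g3 (?f3 t))"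
  proof -
    have inj: "inj ?f1" "inj ?f2" "inj ?f3"
      by (auto simp: inj_def)
    have sub: "?f1 ` idxn n \<subseteq> idxn (Suc n)" "?f2 ` idxn n \<subseteq> idxn (Suc n)"
      "?f3 ` idxn n \<subseteq> idxn (Suc n)"
      by (auto simp: idxn_def)
    show ?thesis
      unfolding sum.distrib sum_idxn_shift[OF inj(1) sub(1)] sum_idxn_shift[OF inj(2) sub(2)]
        sum_idxn_shift[OF inj(3) sub(3)] ..
  qed
  also have "\<dots> = (\<Sum>(j, k, l)\<in>idxn n. w j k l *\<^sub>R m j k l)"
    unfolding sum.distrib[symmetric]
  proof (rule sum.cong)
    fix t :: "nat \<times> nat \<times> nat"
    obtain j k l where t: "t = (j, k, l)" by (cases t)
    have "g1 (?f1 t) + g2 (?f2 t) + g3 (?f3 t) = w j k l *\<^sub>R (a (Suc j) k l *\<^sub>R m (Suc j) k l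
        + b j (Suc k) l *\<^sub>R m j (Suc k) l + c j k (Suc l) *\<^sub>R m j k (Suc l))"
      unfolding t g1_def g2_def g3_def by (simp add: scaleR_add_right ac_simps)
    then show "g1 (?f1 t) + g2 (?f2 t) + g3 (?f3 t) = (case t of (j, k, l) \<Rightarrow> w j k l *\<^sub>R m j k l)"
      unfolding local t by simp
  qed simp
  finally show ?case
    using Suc.IH by simp
qed

section \<open>Monomials in q-commuting generators\<close>

lemma power_commute_left:
  fixes x y :: "'a::real_algebra_1"
  assumes "x * y = c *\<^sub>R (y * x)"
  shows "x ^ n * y = c ^ n *\<^sub>R (y * x ^ n)"
proof (induction n)
  case (Suc n)
  have "x ^ Suc n * y = x * (x ^ n * y)" by (simp add: mult.assoc)
  also have "\<dots> = c ^ n *\<^sub>R ((x * y) * x ^ n)" using Suc by (simp add: mult.assoc)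
  also have "\<dots> = c ^ Suc n *\<^sub>R (y * x ^ Suc n)" using assms by (simp add: mult.assoc)
  finally show ?case .
qed simp

lemma power_commute_right:
  fixes x y :: "'a::real_algebra_1"
  assumes "x * y = c *\<^sub>R (y * x)"
  shows "x * y ^ n = c ^ n *\<^sub>R (y ^ n * x)"
proof (induction n)
  case (Suc n)
  have "x * y ^ Suc n = (x * y) * y ^ n" by (simp add: mult.assoc)
  also have "\<dots> = c *\<^sub>R (y * (x * y ^ n))" using assms by (simp add: mult.assoc)
  also have "\<dots> = c ^ Suc n *\<^sub>R (y ^ Suc n * x)" using Suc by (simp add: mult.assoc)
  finally show ?case .
qed simp

lemma zmono_000 [simp]: "zmono z 0 0 0 = 1"
  by (simp add: zmono_def)

locale q_commuting =
  fixes q :: real and z :: "nat \<Rightarrow> 'a::real_algebra_1"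
  assumes z12: "z 1 * z 2 = q *\<^sub>R (z 2 * z 1)"
    and z13: "z 1 * z 3 = q *\<^sub>R (z 3 * z 1)"
    and z23: "z 2 * z 3 = q *\<^sub>R (z 3 * z 2)"
begin

lemma zmono_Suc_left:
  "zmono z (Suc j) k l = z 1 * zmono z j k l"
  "zmono z j (Suc k) l = q ^ j *\<^sub>R (z 2 * zmono z j k l)"
  "zmono z j k (Suc l) = q ^ (j + k) *\<^sub>R (z 3 * zmono z j k l)"
proof -
  show "zmono z (Suc j) k l = z 1 * zmono z j k l"
    by (simp add: zmono_def mult.assoc)
  have "z 1 ^ j * z 2 ^ Suc k = (z 1 ^ j * z 2) * z 2 ^ k"
    by (simp add: mult.assoc)
  then show "zmono z j (Suc k) l = q ^ j *\<^sub>R (z 2 * zmono z j k l)"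
    unfolding zmono_def power_commute_left[OF z12] by (simp add: mult.assoc)
  have "z 1 ^ j * z 2 ^ k * z 3 ^ Suc l = z 1 ^ j * (z 2 ^ k * z 3) * z 3 ^ l"
    by (simp add: mult.assoc)
  also have "\<dots> = q ^ k *\<^sub>R ((z 1 ^ j * z 3) * z 2 ^ k * z 3 ^ l)"
    unfolding power_commute_left[OF z23] by (simp add: mult.assoc)
  also have "\<dots> = q ^ (j + k) *\<^sub>R (z 3 * (z 1 ^ j * z 2 ^ k * z 3 ^ l))"
    unfolding power_commute_left[OF z13] by (simp add: mult.assoc power_add mult.commute)
  finally show "zmono z j k (Suc l) = q ^ (j + k) *\<^sub>R (z 3 * zmono z j k l)"
    unfolding zmono_def .
qed

lemma zmono_Suc_right:
  "zmono z (Suc j) k l = q ^ (k + l) *\<^sub>R (zmono z j k l * z 1)"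
  "zmono z j (Suc k) l = q ^ l *\<^sub>R (zmono z j k l * z 2)"
  "zmono z j k (Suc l) = zmono z j k l * z 3"
proof -
  have "z 1 ^ Suc j * z 2 ^ k * z 3 ^ l = z 1 ^ j * (z 1 * z 2 ^ k) * z 3 ^ l"
    by (simp add: mult.assoc power_Suc2 del: power_Suc)
  also have "\<dots> = q ^ k *\<^sub>R (z 1 ^ j * z 2 ^ k * (z 1 * z 3 ^ l))"
    unfolding power_commute_right[OF z12] by (simp add: mult.assoc)
  also have "\<dots> = q ^ (k + l) *\<^sub>R (z 1 ^ j * z 2 ^ k * z 3 ^ l * z 1)"
    unfolding power_commute_right[OF z13] by (simp add: mult.assoc power_add)
  finally show "zmono z (Suc j) k l = q ^ (k + l) *\<^sub>R (zmono z j k l * z 1)"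
    unfolding zmono_def .
  have "z 1 ^ j * z 2 ^ Suc k * z 3 ^ l = z 1 ^ j * z 2 ^ k * (z 2 * z 3 ^ l)"
    by (simp add: mult.assoc power_Suc2 del: power_Suc)
  then show "zmono z j (Suc k) l = q ^ l *\<^sub>R (zmono z j k l * z 2)"
    unfolding zmono_def power_commute_right[OF z23] by (simp add: mult.assoc)
  show "zmono z j k (Suc l) = zmono z j k l * z 3"
    by (simp add: zmono_def mult.assoc power_Suc2 del: power_Suc)
qed

end

section \<open>Graded star algebras\<close>

locale star_algebra =
  fixes st :: "'a::real_algebra_1 \<Rightarrow> 'a"
  assumes star: "star_alg st"
begin

lemma st_mult: "st (x * y) = st y * st x"
  using star unfolding star_alg_def by blast

lemma st_st [simp]: "st (st x) = x"
  using star unfolding star_alg_def by blast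

lemma st_scaleR: "st (r *\<^sub>R x) = r *\<^sub>R st x"
  using star unfolding star_alg_def by blast

lemma st_one [simp]: "st 1 = 1"
  using star unfolding star_alg_def by blast

lemma st_zero [simp]: "st 0 = 0"
  using st_scaleR[of 0 0] by simp

lemma square_scaled_right: "x = c *\<^sub>R (y * u) \<Longrightarrow> x * st x = (c * c) *\<^sub>R (y * (u * st u) * st y)"
  by (simp add: st_mult st_scaleR mult.assoc)

lemma square_scaled_left: "x = c *\<^sub>R (u * y) \<Longrightarrow> st x * x = (c * c) *\<^sub>R (st y * (st u * u) * y)"
  by (simp add: st_mult st_scaleR mult.assoc)

end

locale graded_star_algebra = star_algebra st
  for st :: "'a::real_algebra_1 \<Rightarrow> 'a" +
  fixes Sig :: "int \<Rightarrow> 'a set"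
  assumes grading: "Z_grading st Sig"
begin

lemma deg_zero: "0 \<in> Sig n"
  using grading unfolding Z_grading_def by blast

lemma deg_add: "x \<in> Sig n \<Longrightarrow> y \<in> Sig n \<Longrightarrow> x + y \<in> Sig n"
  using grading unfolding Z_grading_def by blast

lemma deg_scaleR: "x \<in> Sig n \<Longrightarrow> r *\<^sub>R x \<in> Sig n"
  using grading unfolding Z_grading_def by blast

lemma deg_mult: "x \<in> Sig m \<Longrightarrow> y \<in> Sig n \<Longrightarrow> x * y \<in> Sig (m + n)"
  using grading unfolding Z_grading_def by blast

lemma deg_one: "1 \<in> Sig 0"
  using grading unfolding Z_grading_def by blast

lemma deg_st: "x \<in> Sig n \<Longrightarrow> st x \<in> Sig (- n)"
  using grading unfolding Z_grading_def by blast

lemma deg_sum: "(\<And>x. x \<in> A \<Longrightarrow> f x \<in> Sig n) \<Longrightarrow> sum f A \<in> Sig n"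
  by (induction A rule: infinite_finite_induct) (auto intro: deg_zero deg_add)

lemma deg_power: "x \<in> Sig 1 \<Longrightarrow> x ^ n \<in> Sig (int n)"
  by (induction n) (use deg_one deg_mult in \<open>auto simp: add.commute\<close>)

end

section \<open>Projections defined by isometric columns\<close>

lemma bij_betw_left_inverse_image:
  assumes "\<And>a. a \<in> S \<Longrightarrow> f (e a) = a"
  shows "bij_betw f (e ` S) S" and "\<forall>v\<in>e ` S. e (f v) = v"
proof -
  show "\<forall>v\<in>e ` S. e (f v) = v" using assms by auto
  then show "bij_betw f (e ` S) S"
    by (rule bij_betw_byWitness) (use assms in auto)
qed

definition vecs_on :: "(int \<Rightarrow> 'a::real_algebra_1 set) \<Rightarrow> 'b set \<Rightarrow> ('b \<Rightarrow> 'a) set" where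
  "vecs_on Sig I = {v. (\<forall>t\<in>I. v t \<in> Sig 0) \<and> (\<forall>t. t \<notin> I \<longrightarrow> v t = 0)}"

locale isometric_column = graded_star_algebra st Sig
  for st :: "'a::real_algebra_1 \<Rightarrow> 'a" and Sig +
  fixes I :: "'b set" and \<psi> :: "'b \<Rightarrow> 'a" and d :: int
  assumes unit: "(\<Sum>t\<in>I. st (\<psi> t) * \<psi> t) = 1"
    and deg_\<psi>: "\<And>t. \<psi> t \<in> Sig d"
    and supp: "\<And>t. t \<notin> I \<Longrightarrow> \<psi> t = 0"
begin

lemma proj_deg: "\<psi> t * st (\<psi> s) \<in> Sig 0"
  using deg_mult[OF deg_\<psi> deg_st[OF deg_\<psi>]] by simp

lemma proj_idem: "(\<Sum>u\<in>I. \<psi> t * st (\<psi> u) * (\<psi> u * st (\<psi> s))) = \<psi> t * st (\<psi> s)"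
proof -
  have "(\<Sum>u\<in>I. \<psi> t * st (\<psi> u) * (\<psi> u * st (\<psi> s))) = \<psi> t * (\<Sum>u\<in>I. st (\<psi> u) * \<psi> u) * st (\<psi> s)"
    by (simp add: sum_distrib_left sum_distrib_right mult.assoc)
  then show ?thesis
    by (simp add: unit)
qed

lemma proj_selfadjoint: "st (\<psi> s * st (\<psi> t)) = \<psi> t * st (\<psi> s)"
  by (simp add: st_mult)

lemma column_range:
  "{(\<lambda>t. \<Sum>s\<in>I. \<psi> t * st (\<psi> s) * w s) | w. w \<in> vecs_on Sig I} = (\<lambda>a t. \<psi> t * a) ` Sig (- d)"
proof (intro equalityI subsetI)
  fix v assume "v \<in> {(\<lambda>t. \<Sum>s\<in>I. \<psi> t * st (\<psi> s) * w s) | w. w \<in> vecs_on Sig I}"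
  then obtain w where w: "w \<in> vecs_on Sig I" and v: "v = (\<lambda>t. \<Sum>s\<in>I. \<psi> t * st (\<psi> s) * w s)"
    by blast
  have "st (\<psi> s) * w s \<in> Sig (- d)" if "s \<in> I" for s
    using deg_mult[OF deg_st[OF deg_\<psi>], of "w s" 0 s] w that by (simp add: vecs_on_def)
  then have "(\<Sum>s\<in>I. st (\<psi> s) * w s) \<in> Sig (- d)"
    by (rule deg_sum)
  moreover have "v = (\<lambda>t. \<psi> t * (\<Sum>s\<in>I. st (\<psi> s) * w s))"
    unfolding v by (simp add: sum_distrib_left mult.assoc)
  ultimately show "v \<in> (\<lambda>a t. \<psi> t * a) ` Sig (- d)" by blast
next
  fix v assume "v \<in> (\<lambda>a t. \<psi> t * a) ` Sig (- d)"
  then obtain a where a: "a \<in> Sig (- d)" and v: "v = (\<lambda>t. \<psi> t * a)" by blast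
  have "(\<lambda>s. \<psi> s * a) \<in> vecs_on Sig I"
    using deg_mult[OF deg_\<psi> a] supp by (simp add: vecs_on_def)
  moreover have "(\<Sum>s\<in>I. \<psi> t * st (\<psi> s) * (\<psi> s * a)) = \<psi> t * (\<Sum>s\<in>I. st (\<psi> s) * \<psi> s) * a" for t
    by (simp add: sum_distrib_left sum_distrib_right mult.assoc)
  then have "v = (\<lambda>t. \<Sum>s\<in>I. \<psi> t * st (\<psi> s) * (\<psi> s * a))"
    unfolding v by (simp add: unit)
  ultimately show "v \<in> {(\<lambda>t. \<Sum>s\<in>I. \<psi> t * st (\<psi> s) * w s) | w. w \<in> vecs_on Sig I}"
    by (intro CollectI exI[of _ "\<lambda>s. \<psi> s * a"]) simp
qed

lemma column_coordinate: "(\<Sum>t\<in>I. st (\<psi> t) * (\<psi> t * a)) = a"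
proof -
  have "(\<Sum>t\<in>I. st (\<psi> t) * (\<psi> t * a)) = (\<Sum>t\<in>I. st (\<psi> t) * \<psi> t) * a"
    by (simp add: sum_distrib_right mult.assoc)
  then show ?thesis by (simp add: unit)
qed

lemma right_module:
  assumes M: "M = {(\<lambda>t. \<Sum>s\<in>I. \<psi> t * st (\<psi> s) * w s) | w. w \<in> vecs_on Sig I}"
    and \<phi>: "\<phi> = (\<lambda>v. \<Sum>t\<in>I. st (\<psi> t) * v t)"
  shows "bij_betw \<phi> M (Sig (- d)) \<and>
    (\<forall>v\<in>M. \<forall>w\<in>M. (\<lambda>t. v t + w t) \<in> M \<and> \<phi> (\<lambda>t. v t + w t) = \<phi> v + \<phi> w) \<and>
    (\<forall>v\<in>M. \<forall>b\<in>Sig 0. (\<lambda>t. v t * b) \<in> M \<and> \<phi> (\<lambda>t. v t * b) = \<phi> v * b) \<and>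
    (\<forall>a\<in>Sig (- d). (\<lambda>t. \<psi> t * a) \<in> M \<and> \<phi> (\<lambda>t. \<psi> t * a) = a) \<and>
    (\<forall>v\<in>M. (\<lambda>t. \<psi> t * \<phi> v) = v)"
proof -
  have M_eq: "M = (\<lambda>a t. \<psi> t * a) ` Sig (- d)"
    unfolding M by (rule column_range)
  have inv: "\<phi> (\<lambda>t. \<psi> t * a) = a" for a
    unfolding \<phi> by (rule column_coordinate)
  show ?thesis
  proof (intro conjI ballI)
    show "bij_betw \<phi> M (Sig (- d))" "\<And>v. v \<in> M \<Longrightarrow> (\<lambda>t. \<psi> t * \<phi> v) = v"
      unfolding M_eq using bij_betw_left_inverse_image[of "Sig (- d)" \<phi> "\<lambda>a t. \<psi> t * a"] inv by auto
  next
    fix v w assume "v \<in> M" "w \<in> M"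
    then obtain a b where ab: "a \<in> Sig (- d)" "b \<in> Sig (- d)"
      and vw: "v = (\<lambda>t. \<psi> t * a)" "w = (\<lambda>t. \<psi> t * b)"
      unfolding M_eq by blast
    then have "(\<lambda>t. v t + w t) = (\<lambda>t. \<psi> t * (a + b))"
      by (simp add: distrib_left)
    then show "(\<lambda>t. v t + w t) \<in> M" "\<phi> (\<lambda>t. v t + w t) = \<phi> v + \<phi> w"
      unfolding M_eq using deg_add[OF ab] by (simp_all add: vw inv)
  next
    fix v b assume "v \<in> M" "b \<in> Sig 0"
    then obtain a where a: "a \<in> Sig (- d)" and v: "v = (\<lambda>t. \<psi> t * a)"
      unfolding M_eq by blast
    then have "(\<lambda>t. v t * b) = (\<lambda>t. \<psi> t * (a * b))"
      by (simp add: mult.assoc)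
    then show "(\<lambda>t. v t * b) \<in> M" "\<phi> (\<lambda>t. v t * b) = \<phi> v * b"
      unfolding M_eq using deg_mult[OF a \<open>b \<in> Sig 0\<close>] by (simp_all add: v inv)
  next
    fix a assume "a \<in> Sig (- d)"
    then show "(\<lambda>t. \<psi> t * a) \<in> M" "\<phi> (\<lambda>t. \<psi> t * a) = a"
      unfolding M_eq inv by simp_all
  qed
qed

lemma row_range:
  "{(\<lambda>s. \<Sum>t\<in>I. w t * (\<psi> t * st (\<psi> s))) | w. w \<in> vecs_on Sig I} = (\<lambda>a s. a * st (\<psi> s)) ` Sig d"
proof (intro equalityI subsetI)
  fix v assume "v \<in> {(\<lambda>s. \<Sum>t\<in>I. w t * (\<psi> t * st (\<psi> s))) | w. w \<in> vecs_on Sig I}"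
  then obtain w where w: "w \<in> vecs_on Sig I" and v: "v = (\<lambda>s. \<Sum>t\<in>I. w t * (\<psi> t * st (\<psi> s)))"
    by blast
  have "w t * \<psi> t \<in> Sig d" if "t \<in> I" for t
    using deg_mult[OF _ deg_\<psi>, of "w t" 0 t] w that by (simp add: vecs_on_def)
  then have "(\<Sum>t\<in>I. w t * \<psi> t) \<in> Sig d"
    by (rule deg_sum)
  moreover have "v = (\<lambda>s. (\<Sum>t\<in>I. w t * \<psi> t) * st (\<psi> s))"
    unfolding v by (simp add: sum_distrib_right mult.assoc)
  ultimately show "v \<in> (\<lambda>a s. a * st (\<psi> s)) ` Sig d" by blast
next
  fix v assume "v \<in> (\<lambda>a s. a * st (\<psi> s)) ` Sig d"
  then obtain a where a: "a \<in> Sig d" and v: "v = (\<lambda>s. a * st (\<psi> s))" by blast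
  have "(\<lambda>t. a * st (\<psi> t)) \<in> vecs_on Sig I"
    using deg_mult[OF a deg_st[OF deg_\<psi>]] supp by (simp add: vecs_on_def)
  moreover have "(\<Sum>t\<in>I. a * st (\<psi> t) * (\<psi> t * st (\<psi> s))) = a * (\<Sum>t\<in>I. st (\<psi> t) * \<psi> t) * st (\<psi> s)" for s
    by (simp add: sum_distrib_left sum_distrib_right mult.assoc)
  then have "v = (\<lambda>s. \<Sum>t\<in>I. a * st (\<psi> t) * (\<psi> t * st (\<psi> s)))"
    unfolding v by (simp add: unit)
  ultimately show "v \<in> {(\<lambda>s. \<Sum>t\<in>I. w t * (\<psi> t * st (\<psi> s))) | w. w \<in> vecs_on Sig I}"
    by (intro CollectI exI[of _ "\<lambda>t. a * st (\<psi> t)"]) simp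
qed

lemma row_coordinate: "(\<Sum>t\<in>I. a * st (\<psi> t) * \<psi> t) = a"
proof -
  have "(\<Sum>t\<in>I. a * st (\<psi> t) * \<psi> t) = a * (\<Sum>t\<in>I. st (\<psi> t) * \<psi> t)"
    by (simp add: sum_distrib_left mult.assoc)
  then show ?thesis by (simp add: unit)
qed

lemma left_module:
  assumes L: "L = {(\<lambda>s. \<Sum>t\<in>I. w t * (\<psi> t * st (\<psi> s))) | w. w \<in> vecs_on Sig I}"
    and \<chi>: "\<chi> = (\<lambda>v. \<Sum>t\<in>I. v t * \<psi> t)"
  shows "bij_betw \<chi> L (Sig d) \<and>
    (\<forall>v\<in>L. \<forall>w\<in>L. (\<lambda>t. v t + w t) \<in> L \<and> \<chi> (\<lambda>t. v t + w t) = \<chi> v + \<chi> w) \<and>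
    (\<forall>v\<in>L. \<forall>b\<in>Sig 0. (\<lambda>t. b * v t) \<in> L \<and> \<chi> (\<lambda>t. b * v t) = b * \<chi> v) \<and>
    (\<forall>a\<in>Sig d. (\<lambda>t. a * st (\<psi> t)) \<in> L \<and> \<chi> (\<lambda>t. a * st (\<psi> t)) = a) \<and>
    (\<forall>v\<in>L. (\<lambda>t. \<chi> v * st (\<psi> t)) = v)"
proof -
  have L_eq: "L = (\<lambda>a s. a * st (\<psi> s)) ` Sig d"
    unfolding L by (rule row_range)
  have inv: "\<chi> (\<lambda>t. a * st (\<psi> t)) = a" for a
    unfolding \<chi> by (rule row_coordinate)
  show ?thesis
  proof (intro conjI ballI)
    show "bij_betw \<chi> L (Sig d)" "\<And>v. v \<in> L \<Longrightarrow> (\<lambda>t. \<chi> v * st (\<psi> t)) = v"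
      unfolding L_eq using bij_betw_left_inverse_image[of "Sig d" \<chi> "\<lambda>a s. a * st (\<psi> s)"] inv by auto
  next
    fix v w assume "v \<in> L" "w \<in> L"
    then obtain a b where ab: "a \<in> Sig d" "b \<in> Sig d"
      and vw: "v = (\<lambda>t. a * st (\<psi> t))" "w = (\<lambda>t. b * st (\<psi> t))"
      unfolding L_eq by blast
    then have "(\<lambda>t. v t + w t) = (\<lambda>t. (a + b) * st (\<psi> t))"
      by (simp add: distrib_right)
    then show "(\<lambda>t. v t + w t) \<in> L" "\<chi> (\<lambda>t. v t + w t) = \<chi> v + \<chi> w"
      unfolding L_eq using deg_add[OF ab] by (simp_all add: vw inv)
  next
    fix v b assume "v \<in> L" "b \<in> Sig 0"
    then obtain a where a: "a \<in> Sig d" and v: "v = (\<lambda>t. a * st (\<psi> t))"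
      unfolding L_eq by blast
    then have "(\<lambda>t. b * v t) = (\<lambda>t. (b * a) * st (\<psi> t))"
      by (simp add: mult.assoc)
    then show "(\<lambda>t. b * v t) \<in> L" "\<chi> (\<lambda>t. b * v t) = b * \<chi> v"
      unfolding L_eq using deg_mult[OF \<open>b \<in> Sig 0\<close> a] by (simp_all add: v inv)
  next
    fix a assume "a \<in> Sig d"
    then show "(\<lambda>t. a * st (\<psi> t)) \<in> L" "\<chi> (\<lambda>t. a * st (\<psi> t)) = a"
      unfolding L_eq inv by simp_all
  qed
qed

end

section \<open>The quantum sphere and the column \<open>\<Psi>\<^sub>N\<close>\<close>

locale quantum_sphere = star_algebra st
  for st :: "'a::real_algebra_1 \<Rightarrow> 'a" +
  fixes q :: real and z :: "nat \<Rightarrow> 'a"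
  assumes q_pos: "0 < q" and q_less_1: "q < 1" and rels: "S5q_rels q st z"
begin

sublocale q_commuting q z
  using rels by unfold_locales (auto simp: S5q_rels_def)

lemma sphere: "z 1 * st (z 1) + z 2 * st (z 2) + z 3 * st (z 3) = 1"
  using rels unfolding S5q_rels_def by blast

text \<open>The commutator relations turn the sphere relation into a relation for the
  opposite products \<open>z\<^sub>i\<^sup>* z\<^sub>i\<close>.\<close>
lemma sphere_opposite: "q ^ 4 *\<^sub>R (st (z 1) * z 1) + q\<^sup>2 *\<^sub>R (st (z 2) * z 2) + st (z 3) * z 3 = 1"
proof -
  define x1 x2 x3 where "x1 = z 1 * st (z 1)" and "x2 = z 2 * st (z 2)" and "x3 = z 3 * st (z 3)"
  have opp: "st (z 1) * z 1 = x1"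
    "st (z 2) * z 2 = x2 + (1 - q\<^sup>2) *\<^sub>R x1"
    "st (z 3) * z 3 = x3 + (1 - q\<^sup>2) *\<^sub>R (x1 + x2)"
    using rels unfolding S5q_rels_def x1_def x2_def x3_def by (auto simp: algebra_simps)
  have "q ^ 4 *\<^sub>R (st (z 1) * z 1) + q\<^sup>2 *\<^sub>R (st (z 2) * z 2) + st (z 3) * z 3
      = (q ^ 4 + q\<^sup>2 * (1 - q\<^sup>2) + (1 - q\<^sup>2)) *\<^sub>R x1 + (q\<^sup>2 + (1 - q\<^sup>2)) *\<^sub>R x2 + x3"
    unfolding opp by (simp add: algebra_simps)
  also have "\<dots> = x1 + x2 + x3"
    by (simp add: algebra_simps power2_eq_square power4_eq_xxxx)
  finally show ?thesis
    using sphere unfolding x1_def x2_def x3_def by simp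
qed

text \<open>The powers of \<open>q\<close> produced by reordering a monomial cancel against the
  coefficients of the Pascal recurrences.\<close>
lemma inverse_power_cancel: "inverse q ^ (2 * m) * (q ^ m * q ^ m) = 1"
proof -
  have "inverse q ^ m * q ^ m = 1"
    using q_pos by (simp add: power_mult_distrib[symmetric])
  then show ?thesis
    by (metis mult_2 power_add mult.assoc mult.left_commute mult_1_right)
qed

lemma sum_monomial_squares:
  "(\<Sum>(j, k, l)\<in>idxn n. qtri q j k l *\<^sub>R (zmono z j k l * st (zmono z j k l))) = 1"
proof -
  let ?m = "\<lambda>j k l. zmono z j k l * st (zmono z j k l)"
  have "(\<Sum>(j, k, l)\<in>idxn n. qtri q j k l *\<^sub>R ?m j k l) = qtri q 0 0 0 *\<^sub>R ?m 0 0 0"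
  proof (rule idxn_pascal_sum[where a = "\<lambda>j k l. inverse q ^ (2 * (k + l))"
        and b = "\<lambda>j k l. inverse q ^ (2 * l)" and c = "\<lambda>_ _ _. 1"])
    show "\<And>j k l n. j + k + l = Suc n \<Longrightarrow> qtri q j k l =
        (if 0 < j then inverse q ^ (2 * (k + l)) * qtri q (j - 1) k l else 0)
      + (if 0 < k then inverse q ^ (2 * l) * qtri q j (k - 1) l else 0)
      + (if 0 < l then 1 * qtri q j k (l - 1) else 0)"
      using qtri_pascal[OF q_pos q_less_1] by simp
    fix j k l
    let ?sq = "\<lambda>x. zmono z j k l * (x * st x) * st (zmono z j k l)"
    have "inverse q ^ (2 * (k + l)) *\<^sub>R ?m (Suc j) k l = ?sq (z 1)"
      "inverse q ^ (2 * l) *\<^sub>R ?m j (Suc k) l = ?sq (z 2)"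
      by (simp_all only: square_scaled_right[OF zmono_Suc_right(1)]
          square_scaled_right[OF zmono_Suc_right(2)] scaleR_scaleR inverse_power_cancel scaleR_one)
    moreover have "1 *\<^sub>R ?m j k (Suc l) = ?sq (z 3)"
      by (simp add: zmono_Suc_right(3) st_mult mult.assoc)
    moreover have "?sq (z 1) + ?sq (z 2) + ?sq (z 3)
        = zmono z j k l * (z 1 * st (z 1) + z 2 * st (z 2) + z 3 * st (z 3)) * st (zmono z j k l)"
      by (simp only: distrib_left distrib_right)
    ultimately show "inverse q ^ (2 * (k + l)) *\<^sub>R ?m (Suc j) k l + inverse q ^ (2 * l) *\<^sub>R ?m j (Suc k) l
        + 1 *\<^sub>R ?m j k (Suc l) = ?m j k l"
      unfolding sphere by simp
  qed
  then show ?thesis by simp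
qed

lemma sum_monomial_opposite_squares:
  "(\<Sum>(j, k, l)\<in>idxn n. qtri q j k l *\<^sub>R (q ^ (2 * (2 * j + k)) *\<^sub>R (st (zmono z j k l) * zmono z j k l))) = 1"
proof -
  let ?m = "\<lambda>j k l. q ^ (2 * (2 * j + k)) *\<^sub>R (st (zmono z j k l) * zmono z j k l)"
  have "(\<Sum>(j, k, l)\<in>idxn n. qtri q j k l *\<^sub>R ?m j k l) = qtri q 0 0 0 *\<^sub>R ?m 0 0 0"
  proof (rule idxn_pascal_sum[where a = "\<lambda>_ _ _. 1" and b = "\<lambda>j k l. inverse q ^ (2 * j)"
        and c = "\<lambda>j k l. inverse q ^ (2 * (j + k))"])
    show "\<And>j k l n. j + k + l = Suc n \<Longrightarrow> qtri q j k l =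
        (if 0 < j then 1 * qtri q (j - 1) k l else 0)
      + (if 0 < k then inverse q ^ (2 * j) * qtri q j (k - 1) l else 0)
      + (if 0 < l then inverse q ^ (2 * (j + k)) * qtri q j k (l - 1) else 0)"
      using qtri_pascal_mirror[OF q_pos q_less_1] by simp
    fix j k l :: nat
    let ?e = "2 * (2 * j + k)"
    let ?sq = "\<lambda>x. st (zmono z j k l) * (st x * x) * zmono z j k l"
    have "2 * (2 * Suc j + k) = ?e + 4" by simp
    then have c1: "1 * q ^ (2 * (2 * Suc j + k)) = q ^ ?e * q ^ 4"
      by (simp only: power_add mult_1_left)
    have c2: "inverse q ^ (2 * j) * (q ^ (2 * (2 * j + Suc k)) * (q ^ j * q ^ j)) = q ^ ?e * q\<^sup>2"
    proof -
      have "inverse q ^ (2 * j) * (q ^ (2 * (2 * j + Suc k)) * (q ^ j * q ^ j))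
          = (inverse q ^ (2 * j) * (q ^ j * q ^ j)) * (q ^ ?e * q\<^sup>2)"
        by (simp add: ac_simps flip: power_add)
      then show ?thesis by (simp only: inverse_power_cancel mult_1_left)
    qed
    have c3: "inverse q ^ (2 * (j + k)) * (q ^ ?e * (q ^ (j + k) * q ^ (j + k))) = q ^ ?e"
      using inverse_power_cancel[of "j + k"] by (simp add: ac_simps)
    have "1 *\<^sub>R ?m (Suc j) k l = (1 * q ^ (2 * (2 * Suc j + k))) *\<^sub>R ?sq (z 1)"
      by (simp add: zmono_Suc_left(1) st_mult mult.assoc)
    also have "\<dots> = q ^ ?e *\<^sub>R (q ^ 4 *\<^sub>R ?sq (z 1))"
      by (simp only: c1 scaleR_scaleR)
    finally have t1: "1 *\<^sub>R ?m (Suc j) k l = q ^ ?e *\<^sub>R (q ^ 4 *\<^sub>R ?sq (z 1))" .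
    have t2: "inverse q ^ (2 * j) *\<^sub>R ?m j (Suc k) l = q ^ ?e *\<^sub>R (q\<^sup>2 *\<^sub>R ?sq (z 2))"
      by (simp only: square_scaled_left[OF zmono_Suc_left(2)] scaleR_scaleR c2 mult.assoc)
    have t3: "inverse q ^ (2 * (j + k)) *\<^sub>R ?m j k (Suc l) = q ^ ?e *\<^sub>R ?sq (z 3)"
      by (simp only: square_scaled_left[OF zmono_Suc_left(3)] scaleR_scaleR c3)
    have collect: "q ^ 4 *\<^sub>R ?sq (z 1) + q\<^sup>2 *\<^sub>R ?sq (z 2) + ?sq (z 3) = st (zmono z j k l)
        * (q ^ 4 *\<^sub>R (st (z 1) * z 1) + q\<^sup>2 *\<^sub>R (st (z 2) * z 2) + st (z 3) * z 3) * zmono z j k l"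
      by (simp only: distrib_left distrib_right mult_scaleR_left mult_scaleR_right)
    show "1 *\<^sub>R ?m (Suc j) k l + inverse q ^ (2 * j) *\<^sub>R ?m j (Suc k) l
        + inverse q ^ (2 * (j + k)) *\<^sub>R ?m j k (Suc l) = ?m j k l"
      unfolding t1 t2 t3 scaleR_add_right[symmetric] collect sphere_opposite by simp
  qed
  then show ?thesis by simp
qed

lemma psi_unit: "(\<Sum>t\<in>idx N. st (psi q st z N t) * psi q st z N t) = 1"
proof -
  let ?n = "nat \<bar>N\<bar>"
  have qtri_abs: "\<bar>qtri q j k l\<bar> = qtri q j k l" for j k l
    using qtri_pos[OF q_pos q_less_1, of j k l] by simp
  have "(\<Sum>t\<in>idx N. st (psi q st z N t) * psi q st z N t)
      = (\<Sum>t\<in>idxn ?n. psi_star q st z N t * st (psi_star q st z N t))"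
    unfolding idx_idxn by (rule sum.cong) (simp_all add: psi_def idx_idxn)
  also have "\<dots> = 1"
  proof (cases "0 \<le> N")
    case True
    have "(\<Sum>t\<in>idxn ?n. psi_star q st z N t * st (psi_star q st z N t))
        = (\<Sum>(j, k, l)\<in>idxn ?n. qtri q j k l *\<^sub>R (zmono z j k l * st (zmono z j k l)))"
      by (rule sum.cong) (auto simp: psi_star_def True st_scaleR qtri_abs)
    then show ?thesis
      using sum_monomial_squares by simp
  next
    case False
    have "(\<Sum>t\<in>idxn ?n. psi_star q st z N t * st (psi_star q st z N t))
        = (\<Sum>(j, k, l)\<in>idxn ?n. qtri q j k l *\<^sub>R (q ^ (2 * (2 * j + k)) *\<^sub>R (st (zmono z j k l) * zmono z j k l)))"
    proof (rule sum.cong)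
      fix t assume "t \<in> idxn ?n"
      then obtain j k l where t: "t = (j, k, l)" and "j + k + l = ?n"
        by (cases t) (auto simp: idxn_def)
      then have "- N + int j - int l = int (2 * j + k)"
        using False by simp
      then have "q powi (- N + int j - int l) = q ^ (2 * j + k)"
        by (simp only: power_int_of_nat)
      then have "(q powi (- N + int j - int l) * sqrt (qtri q j k l))\<^sup>2 = qtri q j k l * q ^ (2 * (2 * j + k))"
        using qtri_pos[OF q_pos q_less_1, of j k l]
        by (simp add: power_mult_distrib mult.commute flip: power_mult)
      then show "psi_star q st z N t * st (psi_star q st z N t)
          = (case t of (j, k, l) \<Rightarrow> qtri q j k l *\<^sub>R (q ^ (2 * (2 * j + k)) *\<^sub>R (st (zmono z j k l) * zmono z j k l)))"
        unfolding t psi_star_def using False by (simp add: st_scaleR power2_eq_square)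
    qed simp
    then show ?thesis
      using sum_monomial_opposite_squares by simp
  qed
  finally show ?thesis .
qed

end

context graded_star_algebra
begin

lemma zmono_deg:
  assumes "\<forall>i\<in>{1, 2, 3}. z i \<in> Sig 1"
  shows "zmono z j k l \<in> Sig (int (j + k + l))"
  using deg_mult[OF deg_mult[OF deg_power deg_power] deg_power] assms
  by (simp add: zmono_def add.assoc)

lemma psi_deg:
  assumes "\<forall>i\<in>{1, 2, 3}. z i \<in> Sig 1"
  shows "psi q st z N t \<in> Sig (- N)"
proof (cases "t \<in> idx N")
  case True
  then obtain j k l where t: "t = (j, k, l)" and n: "j + k + l = nat \<bar>N\<bar>"
    by (cases t) (auto simp: idx_def)
  have "psi_star q st z N t \<in> Sig N"
  proof (cases "0 \<le> N")
    case True
    then show ?thesis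
      using deg_scaleR[OF zmono_deg[OF assms, of j k l]] n by (simp add: t psi_star_def)
  next
    case False
    then show ?thesis
      using deg_scaleR[OF deg_st[OF zmono_deg[OF assms, of j k l]]] n by (simp add: t psi_star_def)
  qed
  then show ?thesis
    using True deg_st by (simp add: psi_def)
qed (simp add: psi_def deg_zero)

end

theorem proposition3p2:
  fixes q :: real and st :: "'a::real_algebra_1 \<Rightarrow> 'a" and z :: "nat \<Rightarrow> 'a"
    and Sig :: "int \<Rightarrow> 'a set" and N :: int
  assumes "0 < q" and "q < 1"
    and "star_alg st" and "S5q_rels q st z" and "Z_grading st Sig"
    and "\<forall>i\<in>{1,2,3}. z i \<in> Sig 1"
  defines "\<Psi> \<equiv> psi q st z N" and "P \<equiv> Pmat q st z N"
    and "\<Psi>' \<equiv> psi q st z (- N)" and "P' \<equiv> Pmat q st z (- N)"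
    and "M \<equiv> {(\<lambda>t. \<Sum>s\<in>idx N. Pmat q st z N t s * w s) | w. w \<in> vecs Sig N}"
    and "\<phi> \<equiv> (\<lambda>v. \<Sum>t\<in>idx N. st (psi q st z N t) * v t)"
    and "L \<equiv> {(\<lambda>s. \<Sum>t\<in>idx (- N). w t * Pmat q st z (- N) t s) | w. w \<in> vecs Sig (- N)}"
    and "\<chi> \<equiv> (\<lambda>v. \<Sum>t\<in>idx (- N). v t * psi q st z (- N) t)"
  shows
    "card (idx N) = dN N \<and>
     (\<Sum>t\<in>idx N. st (\<Psi> t) * \<Psi> t) = 1 \<and>
     (\<forall>t\<in>idx N. \<forall>s\<in>idx N. P t s \<in> Sig 0) \<and>
     (\<forall>t\<in>idx N. \<forall>s\<in>idx N. (\<Sum>u\<in>idx N. P t u * P u s) = P t s) \<and>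
     (\<forall>t\<in>idx N. \<forall>s\<in>idx N. st (P s t) = P t s) \<and>
     bij_betw \<phi> M (Sig N) \<and>
     (\<forall>v\<in>M. \<forall>w\<in>M. (\<lambda>t. v t + w t) \<in> M \<and> \<phi> (\<lambda>t. v t + w t) = \<phi> v + \<phi> w) \<and>
     (\<forall>v\<in>M. \<forall>b\<in>Sig 0. (\<lambda>t. v t * b) \<in> M \<and> \<phi> (\<lambda>t. v t * b) = \<phi> v * b) \<and>
     (\<forall>a\<in>Sig N. (\<lambda>t. \<Psi> t * a) \<in> M \<and> \<phi> (\<lambda>t. \<Psi> t * a) = a) \<and>
     (\<forall>v\<in>M. (\<lambda>t. \<Psi> t * \<phi> v) = v) \<and>
     bij_betw \<chi> L (Sig N) \<and>
     (\<forall>v\<in>L. \<forall>w\<in>L. (\<lambda>t. v t + w t) \<in> L \<and> \<chi> (\<lambda>t. v t + w t) = \<chi> v + \<chi> w) \<and>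
     (\<forall>v\<in>L. \<forall>b\<in>Sig 0. (\<lambda>t. b * v t) \<in> L \<and> \<chi> (\<lambda>t. b * v t) = b * \<chi> v) \<and>
     (\<forall>a\<in>Sig N. (\<lambda>t. a * st (\<Psi>' t)) \<in> L \<and> \<chi> (\<lambda>t. a * st (\<Psi>' t)) = a) \<and>
     (\<forall>v\<in>L. (\<lambda>t. \<chi> v * st (\<Psi>' t)) = v)"
proof -
  interpret quantum_sphere st q z
    using assms(1-4) by unfold_locales
  interpret graded_star_algebra st Sig
    using assms(5) by unfold_locales
  interpret col: isometric_column st Sig "idx N" \<Psi> "- N"
    unfolding \<Psi>_def using psi_unit psi_deg[OF assms(6)] by unfold_locales (simp_all add: psi_def)
  interpret row: isometric_column st Sig "idx (- N)" \<Psi>' N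
    unfolding \<Psi>'_def using psi_unit psi_deg[OF assms(6), where N = "- N"]
    by unfold_locales (simp_all add: psi_def)
  have vecs: "vecs Sig n = vecs_on Sig (idx n)" for n
    by (simp add: vecs_def vecs_on_def)
  have card: "card (idx N) = dN N"
    by (simp add: idx_idxn card_idxn dN_def)
  have proj: "\<forall>t\<in>idx N. \<forall>s\<in>idx N. P t s \<in> Sig 0 \<and> (\<Sum>u\<in>idx N. P t u * P u s) = P t s
      \<and> st (P s t) = P t s"
    unfolding P_def Pmat_def \<Psi>_def[symmetric] using col.proj_deg col.proj_idem col.proj_selfadjoint by simp
  have M_eq: "M = {(\<lambda>t. \<Sum>s\<in>idx N. \<Psi> t * st (\<Psi> s) * w s) | w. w \<in> vecs_on Sig (idx N)}"
    "\<phi> = (\<lambda>v. \<Sum>t\<in>idx N. st (\<Psi> t) * v t)"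
    unfolding M_def \<phi>_def Pmat_def \<Psi>_def vecs by simp_all
  have L_eq: "L = {(\<lambda>s. \<Sum>t\<in>idx (- N). w t * (\<Psi>' t * st (\<Psi>' s))) | w. w \<in> vecs_on Sig (idx (- N))}"
    "\<chi> = (\<lambda>v. \<Sum>t\<in>idx (- N). v t * \<Psi>' t)"
    unfolding L_def \<chi>_def Pmat_def \<Psi>'_def vecs by simp_all
  show ?thesis
    using card col.unit proj col.right_module[OF M_eq] row.left_module[OF L_eq] by simp
qed

end
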